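(* Let $u$ be a unit vector of the form $\frac{1}{\sqrt2^{\,k}\sqrt5^{\,\ell}}\begin{bmatrix}\alpha\\\beta\end{bmatrix}$ with $k,\ell\in\mathbb N$, $0\le k\le 2$, $\alpha,\beta\in\mathbb Z[i]$, whose least denominator exponent is $(k,\ell)$. Then there exists a Clifford circuit $W$ such that $Wu$ has least denominator exponent $(0,\ell)$.
   Context: A Clifford circuit is a product of the gates $\omega I$ (with $\omega=e^{i\pi/4}$), $H=\frac{1}{\sqrt2}\begin{bmatrix}1&1\\1&-1\end{bmatrix}$, $S=\begin{bmatrix}1&0\\0&i\end{bmatrix}$ and their inverses. For a vector $v\in\mathbb C^2$ that can be written as $\frac{1}{\sqrt2^{\,k}\sqrt5^{\,\ell}}\begin{bmatrix}\alpha\\\beta\end{bmatrix}$ with $k,\ell\in\mathbb N$, $0\le k\le2$, $\alpha,\beta\in\mathbb Z[i]$, the least $\sqrt2$-denominator exponent (resp. least $\sqrt5$-denominator exponent) is the least $k$ (resp. least $\ell$) for which such a representation exists, and the least denominator exponent of $v$ is the pair (least $\sqrt2$-exponent, least $\sqrt5$-exponent). *)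

theory Defs
  imports "HOL-Analysis.Analysis"
begin

definition gaussian_int :: "complex \<Rightarrow> bool" where
  "gaussian_int z \<longleftrightarrow> Re z \<in> \<int> \<and> Im z \<in> \<int>"

definition vec2 :: "complex \<Rightarrow> complex \<Rightarrow> complex ^ 2" where
  "vec2 a b = vector [a, b]"

definition mat2 :: "complex \<Rightarrow> complex \<Rightarrow> complex \<Rightarrow> complex \<Rightarrow> complex ^ 2 ^ 2" where
  "mat2 a b c d = vector [vector [a, b], vector [c, d]]"

definition omega :: complex where
  "omega = cis (pi / 4)"

definition gate_H :: "complex ^ 2 ^ 2" where
  "gate_H = mat2 (1 / sqrt 2) (1 / sqrt 2) (1 / sqrt 2) (- 1 / sqrt 2)"

definition gate_S :: "complex ^ 2 ^ 2" where
  "gate_S = mat2 1 0 0 \<i>"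

definition gate_omega :: "complex ^ 2 ^ 2" where
  "gate_omega = mat2 omega 0 0 omega"

inductive clifford :: "complex ^ 2 ^ 2 \<Rightarrow> bool" where
  clif_id: "clifford (mat 1)"
| clif_omega: "clifford W \<Longrightarrow> clifford (gate_omega ** W)"
| clif_omega_inv: "clifford W \<Longrightarrow> clifford (matrix_inv gate_omega ** W)"
| clif_H: "clifford W \<Longrightarrow> clifford (gate_H ** W)"
| clif_H_inv: "clifford W \<Longrightarrow> clifford (matrix_inv gate_H ** W)"
| clif_S: "clifford W \<Longrightarrow> clifford (gate_S ** W)"
| clif_S_inv: "clifford W \<Longrightarrow> clifford (matrix_inv gate_S ** W)"

definition representable :: "nat \<Rightarrow> nat \<Rightarrow> complex ^ 2 \<Rightarrow> bool" where
  "representable k l v \<longleftrightarrow> k \<le> 2 \<and>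
     (\<exists>\<alpha> \<beta>. gaussian_int \<alpha> \<and> gaussian_int \<beta> \<and>
        v = vec2 (\<alpha> / complex_of_real (sqrt 2 ^ k * sqrt 5 ^ l))
                 (\<beta> / complex_of_real (sqrt 2 ^ k * sqrt 5 ^ l)))"

definition lde2 :: "complex ^ 2 \<Rightarrow> nat" where
  "lde2 v = (LEAST k. \<exists>l. representable k l v)"

definition lde5 :: "complex ^ 2 \<Rightarrow> nat" where
  "lde5 v = (LEAST l. \<exists>k. representable k l v)"

definition lde :: "complex ^ 2 \<Rightarrow> nat \<times> nat" where
  "lde v = (lde2 v, lde5 v)"

end

theory Submission
  imports Defs
begin

text \<open>Write \<open>u = (a + b\<i>, c + d\<i>) / (\<surd>2^k \<surd>5^l)\<close>; then \<open>a\<^sup>2 + b\<^sup>2 + c\<^sup>2 + d\<^sup>2 = 2^k 5^l\<close>.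
  Each of \<open>H\<close>, \<open>\<omega>\<^sup>-\<^sup>1\<close> raises the \<open>\<surd>2\<close>-exponent by one while replacing the numerators
  by sums and differences of them, and \<open>S\<close> permutes them up to sign. When \<open>k \<ge> 1\<close>, the
  parities forced by the norm equation let one choose such a gate after which all numerators
  are even, so the \<open>\<surd>2\<close>-exponent drops by one; two steps suffice. The \<open>\<surd>5\<close>-exponent cannot
  drop: the old numerators are integer combinations of the new ones, so if the new ones were
  all divisible by 5 then so would be \<open>a, b, c, d\<close>, contradicting the minimality of \<open>l\<close>.\<close>

lemma vec2_nth [simp]: "vec2 a b $ 1 = a" "vec2 a b $ 2 = b"
  by (simp_all add: vec2_def)

lemma vec2_eq_iff: "vec2 a b = vec2 c d \<longleftrightarrow> a = c \<and> b = d"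
  by (auto simp: vec_eq_iff forall_2)

lemma mat2_mult_vec2: "mat2 a b c d *v vec2 x y = vec2 (a * x + b * y) (c * x + d * y)"
  by (simp add: vec_eq_iff forall_2 matrix_vector_mult_def sum_2 mat2_def)

lemma mat2_mult_mat2:
  "mat2 a b c d ** mat2 a' b' c' d' =
     mat2 (a * a' + b * c') (a * b' + b * d') (c * a' + d * c') (c * b' + d * d')"
  by (simp add: vec_eq_iff forall_2 matrix_matrix_mult_def sum_2 mat2_def)

lemma mat2_id: "mat2 1 0 0 1 = mat 1"
  by (simp add: vec_eq_iff forall_2 mat2_def mat_def)

lemma norm_vec2: "norm (vec2 a b) = sqrt ((cmod a)\<^sup>2 + (cmod b)\<^sup>2)"
  by (simp add: norm_vec_def L2_set_def sum_2)

lemma matrix_inv_eqI: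
  fixes A B :: "'a::semiring_1 ^ 'n ^ 'n"
  assumes "A ** B = mat 1" and "B ** A = mat 1"
  shows "matrix_inv A = B"
proof -
  let ?C = "matrix_inv A"
  have C: "A ** ?C = mat 1 \<and> ?C ** A = mat 1"
    unfolding matrix_inv_def by (rule someI[of _ B]) (use assms in blast)
  have "?C = ?C ** (A ** B)" using assms(1) by simp
  also have "\<dots> = (?C ** A) ** B" by (simp add: matrix_mul_assoc)
  also have "\<dots> = B" using C by simp
  finally show ?thesis .
qed

definition rep_vec :: "nat \<Rightarrow> nat \<Rightarrow> int \<Rightarrow> int \<Rightarrow> int \<Rightarrow> int \<Rightarrow> complex ^ 2" where
  "rep_vec k l a b c d =
     vec2 (Complex (of_int a) (of_int b) / complex_of_real (sqrt 2 ^ k * sqrt 5 ^ l))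
          (Complex (of_int c) (of_int d) / complex_of_real (sqrt 2 ^ k * sqrt 5 ^ l))"

lemma gaussian_int_iff: "gaussian_int z \<longleftrightarrow> (\<exists>a b. z = Complex (of_int a) (of_int b))"
proof
  assume "gaussian_int z"
  then obtain a b where "Re z = of_int a" "Im z = of_int b"
    unfolding gaussian_int_def by (metis Ints_cases)
  then show "\<exists>a b. z = Complex (of_int a) (of_int b)" by (metis complex.exhaust_sel)
qed (auto simp: gaussian_int_def)

lemma representable_iff: "representable k l v \<longleftrightarrow> k \<le> 2 \<and> (\<exists>a b c d. v = rep_vec k l a b c d)"
  unfolding representable_def rep_vec_def gaussian_int_iff by blast

lemma rep_vec_eq_iff:
  "rep_vec k l a b c d = rep_vec k' l' a' b' c' d' \<longleftrightarrow>
     (\<forall>x \<in> {(a, a'), (b, b'), (c, c'), (d, d')}.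
        real_of_int (fst x) / (sqrt 2 ^ k * sqrt 5 ^ l) =
        real_of_int (snd x) / (sqrt 2 ^ k' * sqrt 5 ^ l'))"
  unfolding rep_vec_def vec2_eq_iff complex_eq_iff
  by (simp add: Re_divide_of_real Im_divide_of_real conj_ac)

lemma sqrt_power_square: "x \<ge> 0 \<Longrightarrow> (sqrt x ^ k)\<^sup>2 = x ^ k"
  by (metis power_mult mult.commute real_sqrt_pow2)

lemma sum_squares_if_norm_rep_vec:
  assumes "norm (rep_vec k l a b c d) = 1"
  shows "a\<^sup>2 + b\<^sup>2 + c\<^sup>2 + d\<^sup>2 = 2 ^ k * 5 ^ l"
proof -
  let ?s = "sqrt 2 ^ k * sqrt 5 ^ l"
  have s: "?s > 0" by simp
  have "(cmod (Complex (of_int a) (of_int b) / complex_of_real ?s))\<^sup>2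
      + (cmod (Complex (of_int c) (of_int d) / complex_of_real ?s))\<^sup>2 = 1"
    using assms unfolding rep_vec_def norm_vec2 by (metis real_sqrt_eq_1_iff)
  then have "(real_of_int a ^ 2 + real_of_int b ^ 2 + real_of_int c ^ 2 + real_of_int d ^ 2) / ?s\<^sup>2 = 1"
    using s by (simp add: norm_divide cmod_def power_divide add_divide_distrib)
  then have "real_of_int (a\<^sup>2 + b\<^sup>2 + c\<^sup>2 + d\<^sup>2) = real_of_int (2 ^ k * 5 ^ l)"
    using s by (simp add: power_mult_distrib sqrt_power_square)
  then show ?thesis by (simp only: of_int_eq_iff)
qed

lemma rep_vec_cancel_2: "rep_vec (k + 2) l (2 * a) (2 * b) (2 * c) (2 * d) = rep_vec k l a b c d"
proof -
  have "sqrt 2 ^ (k + 2) = 2 * sqrt 2 ^ k" by (simp add: power_add)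
  then show ?thesis unfolding rep_vec_eq_iff by (simp only:) simp
qed

lemma rep_vec_cancel_5: "rep_vec k (l + 2) (5 * a) (5 * b) (5 * c) (5 * d) = rep_vec k l a b c d"
proof -
  have "sqrt 5 ^ (l + 2) = 5 * sqrt 5 ^ l" by (simp add: power_add)
  then show ?thesis unfolding rep_vec_eq_iff by (simp only:) simp
qed

lemma gate_H_rep_vec:
  "gate_H *v rep_vec k l a b c d = rep_vec (k + 1) l (a + c) (b + d) (a - c) (b - d)"
  unfolding gate_H_def rep_vec_def mat2_mult_vec2 vec2_eq_iff
  by (simp add: complex_eq_iff field_simps)

lemma gate_S_rep_vec: "gate_S *v rep_vec k l a b c d = rep_vec k l a b (- d) c"
  unfolding gate_S_def rep_vec_def mat2_mult_vec2 vec2_eq_iff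
  by (simp add: complex_eq_iff)

lemma omega_eq: "omega = complex_of_real (1 / sqrt 2) * (1 + \<i>)"
  by (simp add: omega_def cis.ctr cos_45 sin_45 complex_eq_iff real_div_sqrt)

lemma matrix_inv_gate_omega: "matrix_inv gate_omega = mat2 (cnj omega) 0 0 (cnj omega)"
proof -
  have "omega * cnj omega = 1"
    unfolding omega_eq by (simp add: complex_eq_iff power2_eq_square [symmetric])
  then show ?thesis
    unfolding gate_omega_def
    by (intro matrix_inv_eqI) (simp_all add: mat2_mult_mat2 mat2_id mult.commute)
qed

lemma gate_omega_inv_rep_vec:
  "matrix_inv gate_omega *v rep_vec k l a b c d = rep_vec (k + 1) l (a + b) (b - a) (c + d) (d - c)"
  unfolding matrix_inv_gate_omega omega_eq rep_vec_def mat2_mult_vec2 vec2_eq_iff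
  by (simp add: complex_eq_iff field_simps)

lemma clifford_mult: "clifford W \<Longrightarrow> clifford V \<Longrightarrow> clifford (W ** V)"
  by (induction rule: clifford.induct) (auto simp flip: matrix_mul_assoc intro: clifford.intros)

lemma clifford_gates: "clifford gate_H" "clifford gate_S" "clifford (matrix_inv gate_omega)"
  using clif_H[OF clif_id] clif_S[OF clif_id] clif_omega_inv[OF clif_id] by simp_all

text \<open>The divisibility clause records that \<open>a, b, c, d\<close> are integer combinations of the
  new numerators; it is what keeps the \<open>\<surd>5\<close>-exponent from dropping.\<close>

definition reducible :: "nat \<Rightarrow> nat \<Rightarrow> int \<Rightarrow> int \<Rightarrow> int \<Rightarrow> int \<Rightarrow> bool" where
  "reducible k l a b c d \<longleftrightarrow>
     (\<exists>W p q r s. clifford W \<and> W *v rep_vec k l a b c d = rep_vec 0 l p q r s \<and>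
        (\<forall>m. m dvd p \<and> m dvd q \<and> m dvd r \<and> m dvd s \<longrightarrow>
             m dvd a \<and> m dvd b \<and> m dvd c \<and> m dvd d))"

lemma reducible_0: "reducible 0 l a b c d"
  unfolding reducible_def by (rule exI[of _ "mat 1"]) (auto intro: clif_id)

lemma reducible_via_gate:
  assumes "clifford G" and "G *v rep_vec k l a b c d = rep_vec k' l p q r s"
    and "\<And>m. m dvd p \<Longrightarrow> m dvd q \<Longrightarrow> m dvd r \<Longrightarrow> m dvd s \<Longrightarrow>
           m dvd a \<and> m dvd b \<and> m dvd c \<and> m dvd d"
    and "reducible k' l p q r s"
  shows "reducible k l a b c d"
proof -
  from assms(4) obtain W p' q' r' s' where W: "clifford W"
      "W *v rep_vec k' l p q r s = rep_vec 0 l p' q' r' s'"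
      "\<forall>m. m dvd p' \<and> m dvd q' \<and> m dvd r' \<and> m dvd s' \<longrightarrow>
           m dvd p \<and> m dvd q \<and> m dvd r \<and> m dvd s"
    unfolding reducible_def by blast
  have "clifford (W ** G)" using W(1) assms(1) by (rule clifford_mult)
  moreover have "(W ** G) *v rep_vec k l a b c d = rep_vec 0 l p' q' r' s'"
    using W(2) assms(2) by (simp flip: matrix_vector_mul_assoc)
  ultimately show ?thesis unfolding reducible_def using W(3) assms(3) by blast
qed

lemma gate_H_halves:
  assumes "a + c = 2 * p" and "b + d = 2 * q"
  obtains r s where "gate_H *v rep_vec (k + 1) l a b c d = rep_vec k l p q r s"
    and "a = p + r" "b = q + s" "c = p - r" "d = q - s"
proof
  have sums: "a + c = 2 * p" "b + d = 2 * q" "a - c = 2 * (p - c)" "b - d = 2 * (q - d)"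
    using assms by simp_all
  have "gate_H *v rep_vec (k + 1) l a b c d =
      rep_vec (k + 2) l (2 * p) (2 * q) (2 * (p - c)) (2 * (q - d))"
    unfolding gate_H_rep_vec sums by (simp only: add.assoc one_add_one)
  then show "gate_H *v rep_vec (k + 1) l a b c d = rep_vec k l p q (p - c) (q - d)"
    unfolding rep_vec_cancel_2 .
qed (use assms in auto)

lemma gate_omega_inv_halves:
  assumes "a + b = 2 * p" and "c + d = 2 * r"
  obtains q s where "matrix_inv gate_omega *v rep_vec (k + 1) l a b c d = rep_vec k l p q r s"
    and "a = p - q" "b = p + q" "c = r - s" "d = r + s"
proof
  have sums: "a + b = 2 * p" "b - a = 2 * (p - a)" "c + d = 2 * r" "d - c = 2 * (r - c)"
    using assms by simp_all
  have "matrix_inv gate_omega *v rep_vec (k + 1) l a b c d =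
      rep_vec (k + 2) l (2 * p) (2 * (p - a)) (2 * r) (2 * (r - c))"
    unfolding gate_omega_inv_rep_vec sums by (simp only: add.assoc one_add_one)
  then show "matrix_inv gate_omega *v rep_vec (k + 1) l a b c d = rep_vec k l p (p - a) r (r - c)"
    unfolding rep_vec_cancel_2 .
qed (use assms in auto)

lemma reducible_1:
  assumes "even (a\<^sup>2 + b\<^sup>2 + c\<^sup>2 + d\<^sup>2)"
  shows "reducible 1 l a b c d"
proof -
  have "even (a + b + c + d)" using assms by simp
  then consider "even (a + b)" "even (c + d)" | "even (a + c)" "even (b + d)"
    | "even (a - d)" "even (b + c)"
    by auto
  then show ?thesis
  proof cases
    case 1
    then obtain p r where "a + b = 2 * p" "c + d = 2 * r" by (metis evenE)
    from gate_omega_inv_halves[OF this, of 0 l] obtain q s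
      where G: "matrix_inv gate_omega *v rep_vec 1 l a b c d = rep_vec 0 l p q r s"
        and abcd: "a = p - q" "b = p + q" "c = r - s" "d = r + s"
      by auto
    show ?thesis
      by (rule reducible_via_gate[OF clifford_gates(3) G _ reducible_0]) (simp add: abcd)
  next
    case 2
    then obtain p q where "a + c = 2 * p" "b + d = 2 * q" by (metis evenE)
    from gate_H_halves[OF this, of 0 l] obtain r s
      where G: "gate_H *v rep_vec 1 l a b c d = rep_vec 0 l p q r s"
        and abcd: "a = p + r" "b = q + s" "c = p - r" "d = q - s"
      by auto
    show ?thesis
      by (rule reducible_via_gate[OF clifford_gates(1) G _ reducible_0]) (simp add: abcd)
  next
    case 3
    then obtain p q where "a + - d = 2 * p" "b + c = 2 * q" by (metis evenE diff_conv_add_uminus)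
    from gate_H_halves[OF this, of 0 l] obtain r s
      where G: "gate_H *v rep_vec 1 l a b (- d) c = rep_vec 0 l p q r s"
        and abcd: "a = p + r" "b = q + s" "- d = p - r" "c = q - s"
      by auto
    have d: "d = r - p" using abcd(3) by simp
    have "reducible 1 l a b (- d) c"
      by (rule reducible_via_gate[OF clifford_gates(1) G _ reducible_0]) (simp add: abcd(1,2,4) d)
    from reducible_via_gate[OF clifford_gates(2) gate_S_rep_vec _ this] show ?thesis by simp
  qed
qed

lemma square_eq_mod_4: "\<exists>t. (x::int)\<^sup>2 = 4 * t + (if even x then 0 else 1)"
proof (cases "even x")
  case True
  then obtain y where "x = 2 * y" by (metis evenE)
  then show ?thesis by (intro exI[of _ "y\<^sup>2"]) (simp add: power2_eq_square)
next
  case False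
  then obtain y where "x = 2 * y + 1" by (metis oddE)
  then show ?thesis
    using False by (intro exI[of _ "y\<^sup>2 + y"]) (simp add: power2_eq_square algebra_simps)
qed

lemma same_parity_if_4_dvd_sum_squares:
  fixes a b c d :: int
  assumes "4 dvd a\<^sup>2 + b\<^sup>2 + c\<^sup>2 + d\<^sup>2"
  shows "(even a \<and> even b \<and> even c \<and> even d) \<or> (odd a \<and> odd b \<and> odd c \<and> odd d)"
proof -
  obtain ta tb tc td where
    "a\<^sup>2 = 4 * ta + (if even a then 0 else 1)" "b\<^sup>2 = 4 * tb + (if even b then 0 else 1)"
    "c\<^sup>2 = 4 * tc + (if even c then 0 else 1)" "d\<^sup>2 = 4 * td + (if even d then 0 else 1)"
    using square_eq_mod_4[of a] square_eq_mod_4[of b] square_eq_mod_4[of c] square_eq_mod_4[of d]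
    by blast
  then show ?thesis using assms by presburger
qed

lemma reducible_2:
  assumes "4 dvd a\<^sup>2 + b\<^sup>2 + c\<^sup>2 + d\<^sup>2"
  shows "reducible 2 l a b c d"
  using same_parity_if_4_dvd_sum_squares[OF assms]
proof
  assume "even a \<and> even b \<and> even c \<and> even d"
  then obtain p q r s where abcd: "a = 2 * p" "b = 2 * q" "c = 2 * r" "d = 2 * s"
    by (elim conjE evenE) blast
  have "mat 1 *v rep_vec 2 l a b c d = rep_vec 0 l p q r s"
    using rep_vec_cancel_2[of 0 l p q r s] by (simp add: abcd numeral_2_eq_2)
  then show ?thesis
    by (rule reducible_via_gate[OF clif_id _ _ reducible_0]) (simp add: abcd)
next
  assume "odd a \<and> odd b \<and> odd c \<and> odd d"
  then have "even (a + b)" "even (c + d)" by auto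
  then obtain p r where "a + b = 2 * p" "c + d = 2 * r" by (metis evenE)
  from gate_omega_inv_halves[OF this, of 1 l, unfolded one_add_one] obtain q s
    where G: "matrix_inv gate_omega *v rep_vec 2 l a b c d = rep_vec 1 l p q r s"
      and abcd: "a = p - q" "b = p + q" "c = r - s" "d = r + s"
    by auto
  have "a\<^sup>2 + b\<^sup>2 + c\<^sup>2 + d\<^sup>2 = 2 * (p\<^sup>2 + q\<^sup>2 + r\<^sup>2 + s\<^sup>2)"
    unfolding abcd by (simp add: power2_eq_square algebra_simps)
  then have "even (p\<^sup>2 + q\<^sup>2 + r\<^sup>2 + s\<^sup>2)"
    using assms dvd_mult_cancel_left[of 2 2 "p\<^sup>2 + q\<^sup>2 + r\<^sup>2 + s\<^sup>2"] by simp
  from reducible_via_gate[OF clifford_gates(3) G _ reducible_1[OF this]] show ?thesis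
    by (simp add: abcd)
qed

lemma five_dvd_if_square_eq:
  fixes x y :: int
  assumes "x\<^sup>2 * 2 ^ k = y\<^sup>2 * 5 ^ m" and "m \<ge> 1"
  shows "5 dvd x"
proof -
  have "(5::int) dvd x\<^sup>2 * 2 ^ k" unfolding assms(1) using assms(2) by (simp add: dvd_power)
  moreover have "coprime (5::int) (2 ^ k)" by simp
  ultimately have "(5::int) dvd x\<^sup>2" by (simp add: coprime_dvd_mult_left_iff)
  then show ?thesis using prime_dvd_power[of "5::int" x 2] by simp
qed

text \<open>Squaring removes the irrational factors: from \<open>x / \<surd>5^l = y / (\<surd>2^k \<surd>5^l')\<close>
  we get \<open>x\<^sup>2 2^k = y\<^sup>2 5^(l - l')\<close>.\<close>

lemma five_dvd_numerator:
  fixes x y :: int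
  assumes "l' < l" and "real_of_int x / sqrt 5 ^ l = real_of_int y / (sqrt 2 ^ k * sqrt 5 ^ l')"
  shows "5 dvd x"
proof -
  define m where "m = l - l'"
  have l: "l = l' + m" and "m \<ge> 1" using assms(1) unfolding m_def by auto
  have "real_of_int x * sqrt 2 ^ k * sqrt 5 ^ l' = real_of_int y * sqrt 5 ^ m * sqrt 5 ^ l'"
    using assms(2) unfolding l power_add by (simp add: field_simps)
  then have "real_of_int x * sqrt 2 ^ k = real_of_int y * sqrt 5 ^ m" by simp
  then have "(real_of_int x * sqrt 2 ^ k)\<^sup>2 = (real_of_int y * sqrt 5 ^ m)\<^sup>2" by simp
  then have "real_of_int (x\<^sup>2 * 2 ^ k) = real_of_int (y\<^sup>2 * 5 ^ m)"
    by (simp add: power_mult_distrib sqrt_power_square)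
  then show ?thesis using five_dvd_if_square_eq \<open>m \<ge> 1\<close> by (simp only: of_int_eq_iff)
qed

lemma five_dvd_if_smaller_l:
  assumes "representable k' l' (rep_vec 0 l p q r s)" and "l' < l"
  shows "5 dvd p \<and> 5 dvd q \<and> 5 dvd r \<and> 5 dvd s"
proof -
  from assms(1) obtain a b c d where "rep_vec 0 l p q r s = rep_vec k' l' a b c d"
    unfolding representable_iff by blast
  then show ?thesis
    unfolding rep_vec_eq_iff using five_dvd_numerator[OF assms(2)] by simp
qed

lemma lde5_le: "representable k l v \<Longrightarrow> lde5 v \<le> l"
  unfolding lde5_def by (rule Least_le) blast

lemma lde_reduced:
  assumes "lde5 (rep_vec k l a b c d) = l" and "k \<le> 2"
    and "a\<^sup>2 + b\<^sup>2 + c\<^sup>2 + d\<^sup>2 = 2 ^ k * 5 ^ l"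
    and "5 dvd p \<and> 5 dvd q \<and> 5 dvd r \<and> 5 dvd s \<Longrightarrow> 5 dvd a \<and> 5 dvd b \<and> 5 dvd c \<and> 5 dvd d"
  shows "lde (rep_vec 0 l p q r s) = (0, l)"
proof -
  let ?v = "rep_vec 0 l p q r s"
  have rep: "representable 0 l ?v" unfolding representable_iff by auto
  have "lde5 ?v = l" unfolding lde5_def
  proof (rule Least_equality)
    fix l' assume "\<exists>k'. representable k' l' ?v"
    show "l \<le> l'"
    proof (rule ccontr)
      assume "\<not> l \<le> l'"
      then have "5 dvd a \<and> 5 dvd b \<and> 5 dvd c \<and> 5 dvd d"
        using five_dvd_if_smaller_l \<open>\<exists>k'. representable k' l' ?v\<close> assms(4) by auto
      then obtain a' b' c' d' where abcd: "a = 5 * a'" "b = 5 * b'" "c = 5 * c'" "d = 5 * d'"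
        by (elim conjE dvdE) blast
      have "(5::int) ^ 2 dvd 2 ^ k * 5 ^ l"
        unfolding assms(3)[symmetric] abcd by (simp add: power_mult_distrib)
      moreover have "coprime ((5::int) ^ 2) (2 ^ k)" by simp
      ultimately have "(5::int) ^ 2 dvd 5 ^ l" by (simp only: coprime_dvd_mult_right_iff)
      have "2 \<le> l"
      proof (rule ccontr)
        assume "\<not> 2 \<le> l"
        then have "l = 0 \<or> l = 1" by auto
        then show False using \<open>(5::int) ^ 2 dvd 5 ^ l\<close> by auto
      qed
      then obtain l'' where l: "l = l'' + 2" by (metis le_add_diff_inverse2)
      have "representable k l'' (rep_vec k l a b c d)"
        unfolding representable_iff abcd l rep_vec_cancel_5 using assms(2) by blast
      then show False using lde5_le assms(1) l by fastforce
    qed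
  qed (use rep in blast)
  moreover have "lde2 ?v = 0" unfolding lde2_def by (rule Least_eq_0) (use rep in blast)
  ultimately show ?thesis unfolding lde_def by simp
qed

text \<open>Only the \<open>\<surd>5\<close>-component of the hypothesis \<open>lde u = (k, l)\<close> is needed.\<close>

theorem lemma6p8:
  fixes u :: "complex ^ 2" and k l :: nat
  assumes "norm u = 1"
    and "representable k l u"
    and "lde u = (k, l)"
  shows "\<exists>W. clifford W \<and> lde (W *v u) = (0, l)"
proof -
  from assms(2) obtain a b c d where k: "k \<le> 2" and u: "u = rep_vec k l a b c d"
    unfolding representable_iff by blast
  have sum: "a\<^sup>2 + b\<^sup>2 + c\<^sup>2 + d\<^sup>2 = 2 ^ k * 5 ^ l"
    using sum_squares_if_norm_rep_vec assms(1) u by blast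
  consider "k = 0" | "k = 1" | "k = 2" using k by linarith
  then have "reducible k l a b c d"
  proof cases
    case 1
    then show ?thesis by (simp add: reducible_0)
  next
    case 2
    show ?thesis using sum unfolding \<open>k = 1\<close> by (intro reducible_1) simp
  next
    case 3
    show ?thesis using sum unfolding \<open>k = 2\<close> by (intro reducible_2) simp
  qed
  then obtain W p q r s where "clifford W" and W: "W *v u = rep_vec 0 l p q r s"
    and "\<forall>m. m dvd p \<and> m dvd q \<and> m dvd r \<and> m dvd s \<longrightarrow> m dvd a \<and> m dvd b \<and> m dvd c \<and> m dvd d"
    unfolding reducible_def u by blast
  moreover have "lde5 (rep_vec k l a b c d) = l" using assms(3) u by (simp add: lde_def)
  ultimately have "lde (W *v u) = (0, l)"
    unfolding W using lde_reduced k sum by blast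
  then show ?thesis using \<open>clifford W\<close> by blast
qed

end
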